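(* Let $\Gamma$ be a distance-regular graph with valency $k\geq 3$, diameter $D\geq 2$ and distinct eigenvalues $\theta_0>\theta_1>\cdots>\theta_D$. If $c_2\neq 1$ and $\Gamma$ contains an induced subgraph isomorphic to a generalized quadrangle $GQ(s,c_2-1)$ for some positive integer $s$, then $\theta_1\leq \frac{k-(a_1+1)}{c_2-1}-1$.
   Context: A connected graph $\Gamma$ of diameter $D$ is distance-regular if there are integers $b_i,c_i$ ($0\le i\le D$) such that for any vertices $x,y$ at distance $i$, $y$ has exactly $c_i$ neighbours at distance $i-1$ from $x$ and $b_i$ neighbours at distance $i+1$ from $x$; $k=b_0$ and $a_i=k-b_i-c_i$. The eigenvalues are those of the adjacency matrix. A generalized quadrangle $GQ(s,t)$ (with $s,t$ positive integers) is a $K_{1,1,2}$-free distance-regular graph of diameter $2$ with intersection array $\{(t+1)s,ts;1,t+1\}$. *)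

theory Defs
  imports Complex_Main
begin

definition simple_graph :: "'a set \<Rightarrow> ('a \<Rightarrow> 'a \<Rightarrow> bool) \<Rightarrow> bool" where
  "simple_graph V E \<longleftrightarrow> finite V \<and> (\<forall>x y. E x y \<longrightarrow> x \<in> V \<and> y \<in> V)
     \<and> (\<forall>x y. E x y \<longrightarrow> E y x) \<and> (\<forall>x. \<not> E x x)"

fun walkn :: "('a \<Rightarrow> 'a \<Rightarrow> bool) \<Rightarrow> nat \<Rightarrow> 'a \<Rightarrow> 'a \<Rightarrow> bool" where
  "walkn E 0 x y = (x = y)"
| "walkn E (Suc n) x y = (\<exists>z. E x z \<and> walkn E n z y)"

definition gdist :: "('a \<Rightarrow> 'a \<Rightarrow> bool) \<Rightarrow> 'a \<Rightarrow> 'a \<Rightarrow> nat" where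
  "gdist E x y = (LEAST n. walkn E n x y)"

definition connected_graph :: "'a set \<Rightarrow> ('a \<Rightarrow> 'a \<Rightarrow> bool) \<Rightarrow> bool" where
  "connected_graph V E \<longleftrightarrow> (\<forall>x\<in>V. \<forall>y\<in>V. \<exists>n. walkn E n x y)"

definition distance_regular ::
  "'a set \<Rightarrow> ('a \<Rightarrow> 'a \<Rightarrow> bool) \<Rightarrow> (nat \<Rightarrow> nat) \<Rightarrow> (nat \<Rightarrow> nat) \<Rightarrow> nat \<Rightarrow> bool" where
  "distance_regular V E b c D \<longleftrightarrow>
     simple_graph V E \<and> connected_graph V E \<and>
     (\<forall>x\<in>V. \<forall>y\<in>V. gdist E x y \<le> D) \<and> (\<exists>x\<in>V. \<exists>y\<in>V. gdist E x y = D) \<and>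
     (\<forall>x\<in>V. \<forall>y\<in>V. \<forall>i\<le>D. gdist E x y = i \<longrightarrow>
        (1 \<le> i \<longrightarrow> card {z\<in>V. E y z \<and> gdist E x z + 1 = i} = c i) \<and>
        card {z\<in>V. E y z \<and> gdist E x z = i + 1} = b i)"

definition drg_a :: "(nat \<Rightarrow> nat) \<Rightarrow> (nat \<Rightarrow> nat) \<Rightarrow> nat \<Rightarrow> nat" where
  "drg_a b c i = b 0 - b i - c i"

definition adj_eigenvalue :: "'a set \<Rightarrow> ('a \<Rightarrow> 'a \<Rightarrow> bool) \<Rightarrow> real \<Rightarrow> bool" where
  "adj_eigenvalue V E \<theta> \<longleftrightarrow> (\<exists>f :: 'a \<Rightarrow> real. (\<exists>x\<in>V. f x \<noteq> 0) \<and>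
     (\<forall>x\<in>V. (\<Sum>y\<in>V. (if E x y then 1 else 0) * f y) = \<theta> * f x))"

definition K112_free :: "'a set \<Rightarrow> ('a \<Rightarrow> 'a \<Rightarrow> bool) \<Rightarrow> bool" where
  "K112_free V E \<longleftrightarrow> \<not> (\<exists>u\<in>V. \<exists>v\<in>V. \<exists>x\<in>V. \<exists>y\<in>V. x \<noteq> y \<and>
     E u v \<and> E u x \<and> E u y \<and> E v x \<and> E v y \<and> \<not> E x y)"

definition is_GQ :: "'a set \<Rightarrow> ('a \<Rightarrow> 'a \<Rightarrow> bool) \<Rightarrow> nat \<Rightarrow> nat \<Rightarrow> bool" where
  "is_GQ V E s t \<longleftrightarrow> 0 < s \<and> 0 < t \<and> K112_free V E \<and>
     (\<exists>b c. distance_regular V E b c 2 \<and> b 0 = (t+1)*s \<and> b 1 = t*s \<and> c 1 = 1 \<and> c 2 = t+1)"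

definition induced :: "('a \<Rightarrow> 'a \<Rightarrow> bool) \<Rightarrow> 'a set \<Rightarrow> 'a \<Rightarrow> 'a \<Rightarrow> bool" where
  "induced E S x y \<longleftrightarrow> E x y \<and> x \<in> S \<and> y \<in> S"

end

theory Submission
  imports Defs "HOL-Computational_Algebra.Fundamental_Theorem_Algebra" "HOL-Library.Indicator_Function"
begin

text \<open>Let \<open>A\<close> be the adjacency matrix and \<open>r = \<Prod>\<^bsub>\<theta>' \<noteq> \<theta>\<^sub>1\<^esub> (x - \<theta>')\<close>.
  Since \<open>A\<close> is symmetric, it is annihilated by \<open>\<Prod>\<^sub>\<theta>' (x - \<theta>')\<close>, so \<open>M = r(A)\<^sup>2\<close>
  is positive semidefinite and satisfies \<open>A M = \<theta>\<^sub>1 M\<close>; by distance-regularity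
  \<open>M(x,y) = \<mu>(d(x,y))\<close>, where \<open>\<mu>\<close> obeys the three-term recurrence of \<open>\<theta>\<^sub>1\<close>
  and \<open>\<mu>\<^sub>0 > 0\<close>.
  A \<open>GQ(s,t)\<close>, \<open>t = c\<^sub>2 - 1\<close>, has an eigenvector \<open>v\<close> for \<open>-(t+1)\<close> orthogonal to
  the all-ones vector; since nonadjacent vertices of the quadrangle are at distance 2 in the
  whole graph, \<open>v\<^sup>T M v = (\<mu>\<^sub>0 - \<mu>\<^sub>2 - (t+1)(\<mu>\<^sub>1 - \<mu>\<^sub>2)) \<parallel>v\<parallel>\<^sup>2 \<ge> 0\<close>.
  Eliminating \<open>\<mu>\<^sub>1, \<mu>\<^sub>2\<close> with the recurrence and using \<open>\<theta>\<^sub>1 < k\<close> gives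
  \<open>t \<theta>\<^sub>1 \<le> b\<^sub>1 - t\<close>.\<close>

definition vanishes_outside :: "'a set \<Rightarrow> ('a \<Rightarrow> 'b::zero) \<Rightarrow> bool" where
  "vanishes_outside V v \<longleftrightarrow> (\<forall>x. x \<notin> V \<longrightarrow> v x = 0)"

definition adj_op :: "'a set \<Rightarrow> ('a \<Rightarrow> 'a \<Rightarrow> bool) \<Rightarrow> ('a \<Rightarrow> 'b::comm_ring_1) \<Rightarrow> 'a \<Rightarrow> 'b" where
  "adj_op V E v x = (if x \<in> V then (\<Sum>y | y \<in> V \<and> E x y. v y) else 0)"

definition adj_poly :: "'a set \<Rightarrow> ('a \<Rightarrow> 'a \<Rightarrow> bool) \<Rightarrow> 'b::comm_ring_1 poly \<Rightarrow> ('a \<Rightarrow> 'b) \<Rightarrow> 'a \<Rightarrow> 'b" where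
  "adj_poly V E p v = (\<lambda>x. \<Sum>i\<le>degree p. coeff p i * (adj_op V E ^^ i) v x)"

section \<open>Polynomials in the adjacency operator\<close>

lemma adj_op_sum: "adj_op V E (\<lambda>z. \<Sum>i\<in>I. c i * u i z) x = (\<Sum>i\<in>I. c i * adj_op V E (u i) x)"
  unfolding adj_op_def by (auto simp: sum_distrib_left intro: sum.swap)

lemma adj_op_scale: "adj_op V E (\<lambda>z. a * u z) x = a * adj_op V E u x"
  unfolding adj_op_def by (auto simp: sum_distrib_left)

lemma adj_pow_sum:
  "(adj_op V E ^^ n) (\<lambda>z. \<Sum>i\<in>I. c i * u i z) x = (\<Sum>i\<in>I. c i * (adj_op V E ^^ n) (u i) x)"
proof (induction n arbitrary: x)
  case (Suc n)
  then have "(adj_op V E ^^ n) (\<lambda>z. \<Sum>i\<in>I. c i * u i z) = (\<lambda>x. \<Sum>i\<in>I. c i * (adj_op V E ^^ n) (u i) x)"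
    by blast
  then show ?case by (simp add: adj_op_sum)
qed simp

lemma adj_poly_eq_sum_lessThan:
  assumes "degree p < N"
  shows "adj_poly V E p v x = (\<Sum>i<N. coeff p i * (adj_op V E ^^ i) v x)"
  unfolding adj_poly_def
  by (rule sum.mono_neutral_left) (use assms in \<open>auto simp: coeff_eq_0\<close>)

lemma adj_poly_add: "adj_poly V E (p + q) v x = adj_poly V E p v x + adj_poly V E q v x"
proof -
  define N where "N = Suc (max (degree p) (degree q))"
  have N: "degree (p + q) < N" "degree p < N" "degree q < N"
    using degree_add_le_max[of p q] by (auto simp: N_def)
  show ?thesis
    unfolding adj_poly_eq_sum_lessThan[OF N(1)] adj_poly_eq_sum_lessThan[OF N(2)]
      adj_poly_eq_sum_lessThan[OF N(3)]
    by (simp add: sum.distrib distrib_right del: sum.lessThan_Suc)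
qed

lemma adj_poly_smult: "adj_poly V E (smult a p) v x = a * adj_poly V E p v x"
proof -
  have N: "degree (smult a p) < Suc (degree p)" "degree p < Suc (degree p)"
    using degree_smult_le[of a p] by auto
  show ?thesis
    unfolding adj_poly_eq_sum_lessThan[OF N(1)] adj_poly_eq_sum_lessThan[OF N(2)]
    by (simp add: sum_distrib_left mult_ac del: sum.lessThan_Suc)
qed

lemma adj_poly_0 [simp]: "adj_poly V E 0 v = (\<lambda>x. 0)"
  by (simp add: adj_poly_def)

lemma adj_poly_1 [simp]: "adj_poly V E 1 v = v"
  by (simp add: adj_poly_def)

lemma adj_poly_pCons: "adj_poly V E (pCons a p) v x = a * v x + adj_op V E (adj_poly V E p v) x"
proof -
  define N where "N = Suc (degree p)"
  have "degree (pCons a p) < Suc N"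
    using degree_pCons_le[of a p] by (simp add: N_def)
  then have "adj_poly V E (pCons a p) v x = (\<Sum>i<Suc N. coeff (pCons a p) i * (adj_op V E ^^ i) v x)"
    by (rule adj_poly_eq_sum_lessThan)
  also have "\<dots> = a * v x + (\<Sum>i<N. coeff p i * adj_op V E ((adj_op V E ^^ i) v) x)"
    by (subst sum.lessThan_Suc_shift) simp
  also have "(\<Sum>i<N. coeff p i * adj_op V E ((adj_op V E ^^ i) v) x)
      = adj_op V E (\<lambda>z. \<Sum>i<N. coeff p i * (adj_op V E ^^ i) v z) x"
    by (simp add: adj_op_sum)
  also have "(\<lambda>z. \<Sum>i<N. coeff p i * (adj_op V E ^^ i) v z) = adj_poly V E p v"
    by (rule ext, rule adj_poly_eq_sum_lessThan[symmetric]) (simp add: N_def)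
  finally show ?thesis .
qed

lemma adj_poly_linear_factor: "adj_poly V E [:-a, 1:] v x = adj_op V E v x - a * v x"
  using adj_poly_1[of V E v] by (simp add: adj_poly_pCons one_pCons[symmetric] del: adj_poly_1)

lemma adj_poly_mult: "adj_poly V E (p * q) v = adj_poly V E p (adj_poly V E q v)"
proof (induction p rule: pCons_induct)
  case (pCons a p)
  then show ?case by (simp add: adj_poly_add adj_poly_smult adj_poly_pCons)
qed simp

lemma adj_poly_commute: "adj_poly V E p (adj_poly V E q v) = adj_poly V E q (adj_poly V E p v)"
  by (metis adj_poly_mult mult.commute)

lemma adj_poly_sum:
  "adj_poly V E p (\<lambda>z. \<Sum>i\<in>I. c i * u i z) x = (\<Sum>i\<in>I. c i * adj_poly V E p (u i) x)"
  unfolding adj_poly_def by (simp add: adj_pow_sum sum_distrib_left mult_ac sum.swap[of _ I])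

lemma adj_pow_eigenvector:
  assumes "adj_op V E f = (\<lambda>x. \<theta> * f x)"
  shows "(adj_op V E ^^ n) f x = \<theta> ^ n * f x"
proof (induction n arbitrary: x)
  case (Suc n)
  then have "(adj_op V E ^^ n) f = (\<lambda>x. \<theta> ^ n * f x)" by blast
  then show ?case using assms by (simp add: adj_op_scale)
qed simp

lemma adj_poly_eigenvector:
  "adj_op V E f = (\<lambda>x. \<theta> * f x) \<Longrightarrow> adj_poly V E p f x = poly p \<theta> * f x"
  unfolding adj_poly_def poly_altdef
  by (simp add: adj_pow_eigenvector sum_distrib_left mult_ac)

lemma vanishes_outside_adj_pow:
  "vanishes_outside V v \<Longrightarrow> vanishes_outside V ((adj_op V E ^^ n) v)"
  by (cases n) (auto simp: vanishes_outside_def adj_op_def)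

lemma vanishes_outside_adj_poly:
  assumes "vanishes_outside V v"
  shows "vanishes_outside V (adj_poly V E p v)"
  using vanishes_outside_adj_pow[OF assms, where E = E] by (simp add: vanishes_outside_def adj_poly_def)

lemma adj_op_eq_sum_if:
  "finite V \<Longrightarrow> x \<in> V \<Longrightarrow> adj_op V E w x = (\<Sum>y\<in>V. if E x y then w y else 0)"
  unfolding adj_op_def by (simp add: sum.inter_filter)

lemma adj_op_symmetric:
  assumes "simple_graph V E"
  shows "(\<Sum>x\<in>V. u x * adj_op V E w x) = (\<Sum>x\<in>V. adj_op V E u x * w x)"
proof -
  have fin: "finite V" and sym: "\<And>x y. E x y \<Longrightarrow> E y x"
    using assms by (auto simp: simple_graph_def)
  have "(\<Sum>x\<in>V. u x * adj_op V E w x) = (\<Sum>x\<in>V. \<Sum>y\<in>V. if E x y then u x * w y else 0)"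
    by (intro sum.cong refl)
      (simp add: adj_op_eq_sum_if[OF fin] sum_distrib_left if_distrib cong: if_cong)
  also have "\<dots> = (\<Sum>y\<in>V. \<Sum>x\<in>V. if E x y then u x * w y else 0)"
    by (rule sum.swap)
  also have "\<dots> = (\<Sum>x\<in>V. adj_op V E u x * w x)"
    by (intro sum.cong refl)
      (auto simp: adj_op_eq_sum_if[OF fin] sum_distrib_right intro!: sum.cong dest: sym)
  finally show ?thesis .
qed

lemma adj_pow_symmetric:
  assumes "simple_graph V E"
  shows "(\<Sum>x\<in>V. u x * (adj_op V E ^^ n) w x) = (\<Sum>x\<in>V. (adj_op V E ^^ n) u x * w x)"
proof (induction n arbitrary: w)
  case (Suc n)
  have "(\<Sum>x\<in>V. u x * (adj_op V E ^^ Suc n) w x) = (\<Sum>x\<in>V. (adj_op V E ^^ n) u x * adj_op V E w x)"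
    using Suc[of "adj_op V E w"] by (simp add: funpow_Suc_right del: funpow.simps)
  also have "\<dots> = (\<Sum>x\<in>V. adj_op V E ((adj_op V E ^^ n) u) x * w x)"
    by (rule adj_op_symmetric[OF assms])
  finally show ?case by simp
qed simp

lemma adj_poly_symmetric:
  assumes "simple_graph V E"
  shows "(\<Sum>x\<in>V. u x * adj_poly V E p w x) = (\<Sum>x\<in>V. adj_poly V E p u x * w x)"
proof -
  have "(\<Sum>x\<in>V. u x * adj_poly V E p w x)
      = (\<Sum>i\<le>degree p. coeff p i * (\<Sum>x\<in>V. u x * (adj_op V E ^^ i) w x))"
    unfolding adj_poly_def by (simp add: sum_distrib_left sum.swap[of _ V] mult_ac)
  also have "\<dots> = (\<Sum>i\<le>degree p. coeff p i * (\<Sum>x\<in>V. (adj_op V E ^^ i) u x * w x))"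
    by (simp add: adj_pow_symmetric[OF assms])
  also have "\<dots> = (\<Sum>x\<in>V. adj_poly V E p u x * w x)"
    unfolding adj_poly_def by (simp add: sum_distrib_left sum_distrib_right sum.swap[of _ V] mult_ac)
  finally show ?thesis .
qed

section \<open>Annihilation by the eigenvalues\<close>

lemma vanishing_functions_dependent:
  fixes u :: "'i \<Rightarrow> 'a \<Rightarrow> 'b::field"
  assumes "finite V" "finite I" "\<forall>i\<in>I. vanishes_outside V (u i)" "card V < card I"
  shows "\<exists>c. (\<exists>i\<in>I. c i \<noteq> 0) \<and> (\<forall>x. (\<Sum>i\<in>I. c i * u i x) = 0)"
  using assms
proof (induction V arbitrary: I u rule: finite_induct)
  case empty
  then obtain i0 where "i0 \<in> I" by fastforce
  moreover have "\<forall>x. (\<Sum>i\<in>I. 1 * u i x) = 0" using empty by (simp add: vanishes_outside_def)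
  ultimately show ?case by (intro exI[of _ "\<lambda>_. 1"]) auto
next
  case (insert a F)
  show ?case
  proof (cases "\<forall>i\<in>I. u i a = 0")
    case True
    then have "\<forall>i\<in>I. vanishes_outside F (u i)"
      using insert.prems(2) unfolding vanishes_outside_def by (metis insert_iff)
    moreover have "card F < card I" using insert by simp
    ultimately show ?thesis using insert.IH[OF insert.prems(1)] by blast
  next
    case False
    then obtain j where j: "j \<in> I" "u j a \<noteq> 0" by blast
    \<comment> \<open>Eliminate the coordinate \<open>a\<close> using \<open>u j\<close>, and recurse on the remaining functions.\<close>
    define I' where "I' = I - {j}"
    define u' where "u' = (\<lambda>i x. u i x - (u i a / u j a) * u j x)"
    have "vanishes_outside F (u' i)" if i: "i \<in> I'" for i
      using insert.prems(2) i j unfolding vanishes_outside_def u'_def I'_def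
      by (metis DiffD1 insert_iff diff_self mult_zero_right nonzero_divide_eq_eq)
    moreover have "finite I'" "card F < card I'"
      using insert j by (simp_all add: I'_def)
    ultimately obtain c' where c': "\<exists>i\<in>I'. c' i \<noteq> 0" "\<forall>x. (\<Sum>i\<in>I'. c' i * u' i x) = 0"
      using insert.IH by blast
    define c where "c = c'(j := - (\<Sum>i\<in>I'. c' i * u i a) / u j a)"
    have "(\<Sum>i\<in>I. c i * u i x) = 0" for x
    proof -
      have "(\<Sum>i\<in>I. c i * u i x) = c j * u j x + (\<Sum>i\<in>I'. c' i * u i x)"
        using insert.prems(1) j unfolding I'_def c_def by (simp add: sum.remove[of I j])
      also have "(\<Sum>i\<in>I'. c' i * u i x)
          = (\<Sum>i\<in>I'. c' i * u' i x) + (\<Sum>i\<in>I'. c' i * u i a) / u j a * u j x"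
        unfolding u'_def
        by (simp add: algebra_simps sum.distrib sum_distrib_left sum_distrib_right sum_divide_distrib sum_subtractf)
      finally show ?thesis using c'(2) by (simp add: c_def)
    qed
    moreover have "\<exists>i\<in>I. c i \<noteq> 0" using c'(1) by (auto simp: c_def I'_def)
    ultimately show ?thesis by blast
  qed
qed

lemma eigenvector_from_linear_factors:
  fixes n :: nat
  shows "u \<noteq> (\<lambda>x. 0) \<Longrightarrow> adj_poly V E (\<Prod>i<n. [:-r i, 1:]) u = (\<lambda>x. 0) \<Longrightarrow>
   \<exists>s a. adj_poly V E s u \<noteq> (\<lambda>x. 0) \<and> adj_op V E (adj_poly V E s u) = (\<lambda>x. a * adj_poly V E s u x)"
proof (induction n arbitrary: u)
  case (Suc n)
  define w where "w = adj_poly V E [:-r n, 1:] u"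
  have w: "adj_poly V E (\<Prod>i<n. [:-r i, 1:]) w = (\<lambda>x. 0)"
    using Suc.prems(2) unfolding w_def prod.lessThan_Suc adj_poly_mult .
  show ?case
  proof (cases "w = (\<lambda>x. 0)")
    case True
    then have "adj_op V E u = (\<lambda>x. r n * u x)"
      unfolding w_def by (intro ext) (metis adj_poly_linear_factor eq_iff_diff_eq_0)
    then show ?thesis using Suc.prems(1) by (intro exI[of _ 1] exI[of _ "r n"]) simp
  next
    case False
    from Suc.IH[OF False w] show ?thesis unfolding w_def adj_poly_mult[symmetric] by blast
  qed
qed simp

lemma exists_eigenvector_adj_poly:
  fixes u :: "'a \<Rightarrow> complex"
  assumes fin: "finite V" and u: "vanishes_outside V u" "u \<noteq> (\<lambda>x. 0)"
  shows "\<exists>s a. adj_poly V E s u \<noteq> (\<lambda>x. 0) \<and> adj_op V E (adj_poly V E s u) = (\<lambda>x. a * adj_poly V E s u x)"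
proof -
  define n where "n = card V"
  have "vanishes_outside V ((adj_op V E ^^ i) u)" for i
    using u(1) by (rule vanishes_outside_adj_pow)
  then obtain c where c: "\<exists>i\<in>{..n}. c i \<noteq> 0" "\<forall>x. (\<Sum>i\<in>{..n}. c i * (adj_op V E ^^ i) u x) = 0"
    using vanishing_functions_dependent[OF fin, of "{..n}" "\<lambda>i. (adj_op V E ^^ i) u"] by (auto simp: n_def)
  define p where "p = Poly (map c [0..<Suc n])"
  have cp: "coeff p i = (if i < Suc n then c i else 0)" for i
    unfolding p_def nth_default_def coeff_Poly_eq by (simp del: upt_Suc)
  have dp: "degree p < Suc n"
    by (rule le_imp_less_Suc, rule degree_le) (simp add: cp)
  have "p \<noteq> 0" using c(1) cp by (metis atMost_iff coeff_0 le_imp_less_Suc)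
  then have lc: "lead_coeff p \<noteq> 0" by simp
  have pu: "adj_poly V E p u x = 0" for x
    using c(2) unfolding adj_poly_eq_sum_lessThan[OF dp] lessThan_Suc_atMost
    by (metis (no_types, lifting) atMost_iff cp le_imp_less_Suc sum.cong)
  obtain root where root: "smult (lead_coeff p) (\<Prod>i<degree p. [:-root i, 1:]) = p"
    using complex_poly_decompose' by blast
  have "adj_poly V E (\<Prod>i<degree p. [:-root i, 1:]) u = (\<lambda>x. 0)"
    using pu lc by (metis adj_poly_smult mult_eq_0_iff root)
  then show ?thesis using eigenvector_from_linear_factors[OF u(2)] by blast
qed

lemma eq_0_if_sum_cnj_mult_self_eq_0:
  assumes "finite V" "vanishes_outside V z" "(\<Sum>x\<in>V. cnj (z x) * z x) = 0"
  shows "z = (\<lambda>x. 0)"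
proof -
  have "complex_of_real (\<Sum>x\<in>V. (cmod (z x))\<^sup>2) = (\<Sum>x\<in>V. cnj (z x) * z x)"
    unfolding of_real_sum complex_norm_square by (simp add: mult.commute)
  then have "(\<Sum>x\<in>V. (cmod (z x))\<^sup>2) = 0"
    using assms(3) of_real_eq_0_iff by metis
  then have "\<forall>x\<in>V. (cmod (z x))\<^sup>2 = 0"
    using assms(1) by (simp add: sum_nonneg_eq_0_iff)
  then show ?thesis using assms(2) by (auto simp: vanishes_outside_def)
qed

lemma adj_op_cnj: "adj_op V E (\<lambda>x. cnj (z x)) x = cnj (adj_op V E z x)"
  unfolding adj_op_def by simp

lemma complex_eigenvalue_real:
  assumes sg: "simple_graph V E" and z: "vanishes_outside V z" "z \<noteq> (\<lambda>x. 0)"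
    and ev: "adj_op V E z = (\<lambda>x. a * z x)"
  shows "a = complex_of_real (Re a)"
proof -
  define S where "S = (\<Sum>x\<in>V. cnj (z x) * z x)"
  have "S \<noteq> 0"
    using eq_0_if_sum_cnj_mult_self_eq_0[of V z] sg z by (auto simp: S_def simple_graph_def)
  moreover have "(\<Sum>x\<in>V. cnj (z x) * adj_op V E z x) = (\<Sum>x\<in>V. adj_op V E (\<lambda>x. cnj (z x)) x * z x)"
    by (rule adj_op_symmetric[OF sg])
  then have "a * S = cnj a * S"
    unfolding S_def by (simp add: adj_op_cnj ev sum_distrib_left mult_ac)
  ultimately have "cnj a = a" by simp
  then show ?thesis by (simp add: complex_eq_iff)
qed

lemma adj_eigenvalue_if_complex_eigenvector:
  assumes fin: "finite V" and z: "vanishes_outside V z" "z \<noteq> (\<lambda>x. 0)"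
    and ev: "adj_op V E z = (\<lambda>x. complex_of_real \<theta> * z x)"
  shows "adj_eigenvalue V E \<theta>"
proof -
  obtain x0 where x0: "x0 \<in> V" "z x0 \<noteq> 0" using z unfolding vanishes_outside_def by fastforce
  have ev': "(\<Sum>y\<in>V. (if E x y then 1 else 0) * h (z y)) = \<theta> * h (z x)"
    if "x \<in> V" and h: "h = Re \<or> h = Im" for x h
  proof -
    have "(\<Sum>y\<in>V. if E x y then z y else 0) = complex_of_real \<theta> * z x"
      using ev adj_op_eq_sum_if[OF fin \<open>x \<in> V\<close>, of E z] by metis
    moreover have "(\<Sum>y\<in>V. (if E x y then 1 else 0) * h (z y)) = h (\<Sum>y\<in>V. if E x y then z y else 0)"
      using h by (auto simp: Re_sum Im_sum intro!: sum.cong)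
    ultimately show ?thesis using h by auto
  qed
  consider "Re (z x0) \<noteq> 0" | "Im (z x0) \<noteq> 0" using x0(2) complex_eq_iff by force
  then show ?thesis
  proof cases
    case 1
    then show ?thesis unfolding adj_eigenvalue_def using x0(1) ev'[where h = Re]
      by (intro exI[of _ "\<lambda>x. Re (z x)"]) auto
  next
    case 2
    then show ?thesis unfolding adj_eigenvalue_def using x0(1) ev'[where h = Im]
      by (intro exI[of _ "\<lambda>x. Im (z x)"]) auto
  qed
qed

text \<open>Since the adjacency operator is self-adjoint, an eigenvector for a real eigenvalue is
  orthogonal to the range of \<open>A - \<theta>\<close>; so \<open>A\<close> has no nontrivial Jordan chains.\<close>

lemma eigenvector_in_range_eq_0:
  assumes sg: "simple_graph V E" and z: "vanishes_outside V z"
    and ev: "adj_op V E z = (\<lambda>x. complex_of_real \<theta> * z x)"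
    and range: "\<And>x. z x = adj_op V E y x - complex_of_real \<theta> * y x"
  shows "z = (\<lambda>x. 0)"
proof -
  have "(\<Sum>x\<in>V. cnj (z x) * adj_op V E y x) = (\<Sum>x\<in>V. adj_op V E (\<lambda>x. cnj (z x)) x * y x)"
    by (rule adj_op_symmetric[OF sg])
  also have "\<dots> = complex_of_real \<theta> * (\<Sum>x\<in>V. cnj (z x) * y x)"
    by (simp add: adj_op_cnj ev sum_distrib_left mult_ac)
  moreover have "cnj (z x) * z x = cnj (z x) * adj_op V E y x - complex_of_real \<theta> * (cnj (z x) * y x)" for x
    by (subst (2) range) (simp add: algebra_simps)
  ultimately have "(\<Sum>x\<in>V. cnj (z x) * z x) = 0"
    by (simp add: sum_subtractf sum_distrib_left)
  then show ?thesis
    using eq_0_if_sum_cnj_mult_self_eq_0 z sg by (auto simp: simple_graph_def)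
qed

lemma complex_annihilated_by_eigenvalues:
  fixes v :: "'a \<Rightarrow> complex"
  assumes sg: "simple_graph V E" and fin: "finite \<Theta>"
    and eigs: "{t. adj_eigenvalue V E t} \<subseteq> \<Theta>" and v: "vanishes_outside V v"
  shows "adj_poly V E (\<Prod>t\<in>\<Theta>. [:- complex_of_real t, 1:]) v = (\<lambda>x. 0)"
proof (rule ccontr)
  define m where "m = (\<Prod>t\<in>\<Theta>. [:- complex_of_real t, 1:])"
  define u where "u = adj_poly V E m v"
  assume "adj_poly V E (\<Prod>t\<in>\<Theta>. [:- complex_of_real t, 1:]) v \<noteq> (\<lambda>x. 0)"
  then have "u \<noteq> (\<lambda>x. 0)" unfolding u_def m_def .
  moreover have u: "vanishes_outside V u" unfolding u_def by (rule vanishes_outside_adj_poly[OF v])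
  ultimately obtain s a where sa: "adj_poly V E s u \<noteq> (\<lambda>x. 0)"
    "adj_op V E (adj_poly V E s u) = (\<lambda>x. a * adj_poly V E s u x)"
    using exists_eigenvector_adj_poly sg by (metis simple_graph_def)
  define z where "z = adj_poly V E s u"
  have z: "vanishes_outside V z" unfolding z_def by (rule vanishes_outside_adj_poly[OF u])
  define \<theta> where "\<theta> = Re a"
  have a: "a = complex_of_real \<theta>"
    using complex_eigenvalue_real[OF sg z] sa unfolding z_def \<theta>_def by blast
  then have Az: "adj_op V E z = (\<lambda>x. complex_of_real \<theta> * z x)" using sa(2) unfolding z_def by simp
  have "\<theta> \<in> \<Theta>"
    using adj_eigenvalue_if_complex_eigenvector[OF _ z _ Az] sg sa(1) eigs
    unfolding z_def by (auto simp: simple_graph_def)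
  then have m: "m = [:- complex_of_real \<theta>, 1:] * (\<Prod>t\<in>\<Theta> - {\<theta>}. [:- complex_of_real t, 1:])"
    unfolding m_def by (rule prod.remove[OF fin])
  define y where "y = adj_poly V E (\<Prod>t\<in>\<Theta> - {\<theta>}. [:- complex_of_real t, 1:]) (adj_poly V E s v)"
  have "z = adj_poly V E m (adj_poly V E s v)"
    unfolding z_def u_def by (rule adj_poly_commute)
  also have "\<dots> = adj_poly V E [:- complex_of_real \<theta>, 1:] y"
    unfolding m adj_poly_mult y_def ..
  finally have "z x = adj_op V E y x - complex_of_real \<theta> * y x" for x
    by (simp add: adj_poly_linear_factor)
  then have "z = (\<lambda>x. 0)" by (rule eigenvector_in_range_eq_0[OF sg z Az])
  with sa(1) show False unfolding z_def by blast
qed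

lemma adj_poly_real_linear_factors:
  assumes "finite \<Theta>"
  shows "adj_poly V E (\<Prod>t\<in>\<Theta>. [:- complex_of_real t, 1:]) (\<lambda>x. complex_of_real (v x))
       = (\<lambda>x. complex_of_real (adj_poly V E (\<Prod>t\<in>\<Theta>. [:- t, 1:]) v x))"
  using assms
proof (induction \<Theta> rule: finite_induct)
  case (insert t \<Theta>)
  have adj_of_real: "adj_op V E (\<lambda>x. complex_of_real (u x)) x = complex_of_real (adj_op V E u x)" for u x
    unfolding adj_op_def by simp
  show ?case
    unfolding prod.insert[OF insert.hyps] adj_poly_mult
    by (rule ext) (simp only: adj_poly_linear_factor insert.IH adj_of_real of_real_diff of_real_mult)
qed simp

theorem annihilated_by_eigenvalues:
  fixes v :: "'a \<Rightarrow> real"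
  assumes "simple_graph V E" "finite \<Theta>" "{t. adj_eigenvalue V E t} \<subseteq> \<Theta>" "vanishes_outside V v"
  shows "adj_poly V E (\<Prod>t\<in>\<Theta>. [:- t, 1:]) v = (\<lambda>x. 0)"
proof -
  have "vanishes_outside V (\<lambda>x. complex_of_real (v x))"
    using assms(4) by (simp add: vanishes_outside_def)
  from complex_annihilated_by_eigenvalues[OF assms(1-3) this]
  show ?thesis unfolding adj_poly_real_linear_factors[OF assms(2)] by (simp add: fun_eq_iff)
qed

section \<open>Distance-regular graphs\<close>

lemma walkn_Suc_right: "walkn E (Suc n) x y \<longleftrightarrow> (\<exists>z. walkn E n x z \<and> E z y)"
  by (induction n arbitrary: x) auto

lemma walkn_sym:
  assumes "\<And>x y. E x y \<Longrightarrow> E y x"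
  shows "walkn E n x y \<Longrightarrow> walkn E n y x"
proof (induction n arbitrary: x y)
  case (Suc n)
  then obtain z where "E x z" "walkn E n z y" by auto
  then show ?case using Suc.IH assms walkn_Suc_right by metis
qed simp

lemma adj_op_cong: "(\<And>z. z \<in> V \<Longrightarrow> u z = w z) \<Longrightarrow> adj_op V E u x = adj_op V E w x"
  unfolding adj_op_def by auto

locale distance_regular_graph =
  fixes V :: "'a set" and E :: "'a \<Rightarrow> 'a \<Rightarrow> bool" and b c :: "nat \<Rightarrow> nat" and D :: nat
  assumes distance_regular: "distance_regular V E b c D"
begin

abbreviation d :: "'a \<Rightarrow> 'a \<Rightarrow> nat" where "d \<equiv> gdist E"

lemma simple: "simple_graph V E"
  using distance_regular by (simp add: distance_regular_def)

lemma finite_vertices: "finite V"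
  using simple by (simp add: simple_graph_def)

lemma adj_sym: "E x y \<Longrightarrow> E y x"
  using simple by (simp add: simple_graph_def)

lemma adj_vertices: "E x y \<Longrightarrow> x \<in> V \<and> y \<in> V"
  using simple by (simp add: simple_graph_def)

lemma adj_irrefl: "\<not> E x x"
  using simple by (simp add: simple_graph_def)

lemma walk_gdist: "x \<in> V \<Longrightarrow> y \<in> V \<Longrightarrow> walkn E (d x y) x y"
  using distance_regular unfolding gdist_def distance_regular_def connected_graph_def
  by (metis LeastI)

lemma gdist_le_walk: "walkn E n x y \<Longrightarrow> d x y \<le> n"
  unfolding gdist_def by (rule Least_le)

lemma gdist_sym: "x \<in> V \<Longrightarrow> y \<in> V \<Longrightarrow> d x y = d y x"
  using walk_gdist gdist_le_walk walkn_sym[of E, OF adj_sym] by (metis le_antisym)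

lemma gdist_eq_0_iff: "x \<in> V \<Longrightarrow> y \<in> V \<Longrightarrow> d x y = 0 \<longleftrightarrow> x = y"
  using walk_gdist gdist_le_walk by (metis walkn.simps(1) le_zero_eq)

lemma gdist_eq_1_iff: "x \<in> V \<Longrightarrow> y \<in> V \<Longrightarrow> d x y = 1 \<longleftrightarrow> E x y"
  using walk_gdist[of x y] gdist_le_walk[of 1 x y] gdist_eq_0_iff[of x y] adj_irrefl
  by (cases "d x y") auto

lemma gdist_adj_le:
  assumes "E x z" "y \<in> V"
  shows "d z y \<le> d x y + 1" "d x y \<le> d z y + 1"
proof -
  have V: "x \<in> V" "z \<in> V" using adj_vertices assms by auto
  have "walkn E (Suc (d z y)) x y" using walk_gdist[OF V(2) assms(2)] assms(1) by auto
  then show "d x y \<le> d z y + 1" using gdist_le_walk by fastforce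
  have "walkn E (Suc (d x y)) z y" using walk_gdist[OF V(1) assms(2)] adj_sym[OF assms(1)] by auto
  then show "d z y \<le> d x y + 1" using gdist_le_walk by fastforce
qed

lemma gdist_eq_2I:
  assumes "x \<in> V" "y \<in> V" "x \<noteq> y" "\<not> E x y" "E x z" "E z y"
  shows "d x y = 2"
proof -
  have "walkn E 2 x y" using assms(5,6) by (auto simp: numeral_2_eq_2)
  then have "d x y \<le> 2" by (rule gdist_le_walk)
  with assms(1-4) gdist_eq_0_iff gdist_eq_1_iff show ?thesis by force
qed

lemma gdist_le_diameter: "x \<in> V \<Longrightarrow> y \<in> V \<Longrightarrow> d x y \<le> D"
  using distance_regular by (simp add: distance_regular_def)

lemma card_c: "x \<in> V \<Longrightarrow> y \<in> V \<Longrightarrow> 1 \<le> d x y \<Longrightarrow> card {z\<in>V. E y z \<and> d x z + 1 = d x y} = c (d x y)"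
  using distance_regular gdist_le_diameter unfolding distance_regular_def by blast

lemma card_b: "x \<in> V \<Longrightarrow> y \<in> V \<Longrightarrow> card {z\<in>V. E y z \<and> d x z = d x y + 1} = b (d x y)"
  using distance_regular gdist_le_diameter unfolding distance_regular_def by blast

lemma card_neighbours:
  assumes "x \<in> V"
  shows "card {z\<in>V. E x z} = b 0"
proof -
  have "{z\<in>V. E x z} = {z\<in>V. E x z \<and> d x z = d x x + 1}"
    using gdist_eq_0_iff[OF assms assms] gdist_eq_1_iff[OF assms] by auto
  then show ?thesis using card_b[OF assms assms] gdist_eq_0_iff[OF assms assms] by simp
qed

lemma c_1_eq_1:
  assumes "E x y"
  shows "c 1 = 1"
proof -
  have V: "x \<in> V" "y \<in> V" using adj_vertices assms by auto
  have dxy: "d x y = 1" using gdist_eq_1_iff[OF V] assms by simp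
  have "{z\<in>V. E y z \<and> d x z + 1 = d x y} = {x}"
    using dxy V gdist_eq_0_iff[OF V(1)] adj_sym[OF assms] by auto
  then show ?thesis using card_c[OF V] dxy by simp
qed

lemma b_diameter_eq_0: "b D = 0"
proof -
  obtain x y where xy: "x \<in> V" "y \<in> V" "d x y = D"
    using distance_regular unfolding distance_regular_def by blast
  have "{z\<in>V. E y z \<and> d x z = d x y + 1} = {}"
    using gdist_le_diameter[OF xy(1)] xy(3) by fastforce
  then show ?thesis using card_b[OF xy(1,2)] xy(3) by (metis card.empty)
qed

text \<open>The value \<open>c 0\<close> is not
  constrained by \<open>distance_regular\<close>; it is replaced by \<open>0\<close> here.\<close>

definition dist_adj :: "(nat \<Rightarrow> real) \<Rightarrow> nat \<Rightarrow> real" where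
  "dist_adj w i = (let ci = if i = 0 then 0 else c i in
     real ci * w (i - 1) + real (b i) * w (i + 1) + (real (b 0) - real ci - real (b i)) * w i)"

lemma neighbours_by_dist:
  assumes x: "x \<in> V" and y: "y \<in> V"
  defines "i \<equiv> d x y"
  shows "card {z\<in>V. E x z \<and> d z y + 1 = i} = (if i = 0 then 0 else c i)"
    and "card {z\<in>V. E x z \<and> d z y = i + 1} = b i"
    and "{z\<in>V. E x z} = {z\<in>V. E x z \<and> d z y + 1 = i} \<union> {z\<in>V. E x z \<and> d z y = i}
           \<union> {z\<in>V. E x z \<and> d z y = i + 1}"
proof -
  have "{z\<in>V. E x z \<and> d z y + 1 = i} = {z\<in>V. E x z \<and> d y z + 1 = d y x}"
    "{z\<in>V. E x z \<and> d z y = i + 1} = {z\<in>V. E x z \<and> d y z = d y x + 1}"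
    using gdist_sym x y by (auto simp: i_def)
  then show "card {z\<in>V. E x z \<and> d z y + 1 = i} = (if i = 0 then 0 else c i)"
    and "card {z\<in>V. E x z \<and> d z y = i + 1} = b i"
    using card_c[OF y x] card_b[OF y x] gdist_sym[OF x y] by (auto simp: i_def)
  show "{z\<in>V. E x z} = {z\<in>V. E x z \<and> d z y + 1 = i} \<union> {z\<in>V. E x z \<and> d z y = i}
           \<union> {z\<in>V. E x z \<and> d z y = i + 1}"
    using gdist_adj_le[OF _ y, of x] unfolding i_def by fastforce
qed

lemma adj_op_dist:
  assumes x: "x \<in> V" and y: "y \<in> V"
  shows "adj_op V E (\<lambda>z. w (d z y)) x = dist_adj w (d x y)"
proof -
  define i where "i = d x y"
  define P Q R where "P = {z\<in>V. E x z \<and> d z y + 1 = i}" and "Q = {z\<in>V. E x z \<and> d z y = i}"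
    and "R = {z\<in>V. E x z \<and> d z y = i + 1}"
  have split: "{z\<in>V. E x z} = P \<union> Q \<union> R" and cP: "card P = (if i = 0 then 0 else c i)"
    and cR: "card R = b i"
    using neighbours_by_dist[OF x y] unfolding P_def Q_def R_def i_def by blast+
  have fin: "finite P" "finite Q" "finite R"
    using finite_vertices by (auto simp: P_def Q_def R_def)
  have disj: "P \<inter> Q = {}" "(P \<union> Q) \<inter> R = {}" by (auto simp: P_def Q_def R_def)
  have "card P + card Q + card R = b 0"
    using card_neighbours[OF x] fin disj unfolding split by (simp add: card_Un_disjoint)
  then have cQ: "real (card Q) = real (b 0) - real (card P) - real (card R)" by simp
  have "adj_op V E (\<lambda>z. w (d z y)) x = (\<Sum>z\<in>P. w (d z y)) + (\<Sum>z\<in>Q. w (d z y)) + (\<Sum>z\<in>R. w (d z y))"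
    unfolding adj_op_def using x fin disj split by (simp add: sum.union_disjoint)
  also have "\<dots> = real (card P) * w (i - 1) + real (card Q) * w i + real (card R) * w (i + 1)"
  proof -
    have const: "(\<Sum>z\<in>A. w (d z y)) = real (card A) * w j" if "\<forall>z\<in>A. d z y = j" for A j
    proof -
      have "(\<Sum>z\<in>A. w (d z y)) = (\<Sum>z\<in>A. w j)" using that by (intro sum.cong) auto
      then show ?thesis by simp
    qed
    have "\<forall>z\<in>P. d z y = i - 1" "\<forall>z\<in>Q. d z y = i" "\<forall>z\<in>R. d z y = i + 1"
      by (auto simp: P_def Q_def R_def)
    then show ?thesis using const by presburger
  qed
  finally show ?thesis unfolding dist_adj_def Let_def cQ cP cR i_def by (simp add: algebra_simps)
qed


lemma c_plus_b_le_valency: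
  assumes "x \<in> V" "y \<in> V" "1 \<le> d x y"
  shows "c (d x y) + b (d x y) \<le> b 0"
proof -
  let ?P = "{z\<in>V. E x z \<and> d z y + 1 = d x y}" and ?R = "{z\<in>V. E x z \<and> d z y = d x y + 1}"
  have "card (?P \<union> ?R) \<le> card {z\<in>V. E x z}"
    using finite_vertices by (intro card_mono) auto
  moreover have "card (?P \<union> ?R) = card ?P + card ?R"
    using finite_vertices by (intro card_Un_disjoint) auto
  ultimately show ?thesis
    using neighbours_by_dist(1,2)[OF assms(1,2)] card_neighbours[OF assms(1)] assms(3) by simp
qed

lemma adj_eigenvalue_le_valency:
  assumes "adj_eigenvalue V E \<theta>"
  shows "\<theta> \<le> real (b 0)"
proof -
  obtain f where f: "\<exists>x\<in>V. f x \<noteq> 0" "\<forall>x\<in>V. (\<Sum>y\<in>V. (if E x y then 1 else 0) * f y) = \<theta> * f x"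
    using assms unfolding adj_eigenvalue_def by blast
  obtain x0 where x0: "x0 \<in> V" "f x0 \<noteq> 0" using f(1) by blast
  define m where "m = Max ((\<lambda>y. \<bar>f y\<bar>) ` V)"
  have "m \<in> (\<lambda>y. \<bar>f y\<bar>) ` V" unfolding m_def using finite_vertices x0 by (intro Max_in) auto
  then obtain x where x: "x \<in> V" "\<bar>f x\<bar> = m" by blast
  have "\<bar>f y\<bar> \<le> \<bar>f x\<bar>" if "y \<in> V" for y
    using finite_vertices that x unfolding m_def by simp
  then have x: "x \<in> V" "\<forall>y\<in>V. \<bar>f y\<bar> \<le> \<bar>f x\<bar>" using x(1) by auto
  have pos: "\<bar>f x\<bar> > 0" using x x0 by fastforce
  have "\<bar>\<theta>\<bar> * \<bar>f x\<bar> = \<bar>\<Sum>y\<in>V. (if E x y then 1 else 0) * f y\<bar>"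
    using f(2) x(1) by (simp add: abs_mult)
  also have "\<dots> \<le> (\<Sum>y\<in>V. if E x y then \<bar>f x\<bar> else 0)"
    by (rule order_trans[OF sum_abs sum_mono]) (auto simp: x(2))
  also have "\<dots> = real (b 0) * \<bar>f x\<bar>"
    using finite_vertices card_neighbours[OF x(1)] by (simp add: sum.If_cases Int_def)
  finally show ?thesis using pos by (simp add: mult_le_cancel_right)
qed

lemma eigenvector_sum_eq_0:
  assumes "adj_op V E v = (\<lambda>x. \<rho> * v x)" "\<rho> \<noteq> real (b 0)"
  shows "(\<Sum>x\<in>V. v x) = 0"
proof -
  have "\<rho> * (\<Sum>x\<in>V. v x) = (\<Sum>x\<in>V. 1 * adj_op V E v x)"
    by (simp add: assms(1) sum_distrib_left)
  also have "\<dots> = (\<Sum>x\<in>V. adj_op V E (\<lambda>_. 1) x * v x)"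
    by (rule adj_op_symmetric[OF simple])
  also have "\<dots> = real (b 0) * (\<Sum>x\<in>V. v x)"
    using card_neighbours by (simp add: adj_op_def sum_distrib_left)
  finally show ?thesis using assms(2) by simp
qed

section \<open>The positive semidefinite kernel of an eigenvalue\<close>

lemma adj_pow_indicator_dist:
  "\<exists>w. \<forall>x\<in>V. \<forall>y\<in>V. (adj_op V E ^^ n) (indicator {y} :: 'a \<Rightarrow> real) x = w (d x y)"
proof (induction n)
  case 0
  show ?case by (intro exI[of _ "\<lambda>i. if i = 0 then 1 else 0"]) (auto simp: gdist_eq_0_iff)
next
  case (Suc n)
  then obtain w where w: "\<forall>x\<in>V. \<forall>y\<in>V. (adj_op V E ^^ n) (indicator {y} :: 'a \<Rightarrow> real) x = w (d x y)"
    by blast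
  have "(adj_op V E ^^ Suc n) (indicator {y}) x = dist_adj w (d x y)" if "x \<in> V" "y \<in> V" for x y
  proof -
    have "(adj_op V E ^^ Suc n) (indicator {y}) x = adj_op V E (\<lambda>z. w (d z y)) x"
      using w that(2) by (auto intro: adj_op_cong)
    also have "\<dots> = dist_adj w (d x y)" by (rule adj_op_dist[OF that])
    finally show ?thesis .
  qed
  then show ?case by blast
qed

lemma adj_poly_indicator_dist:
  fixes p :: "real poly"
  shows "\<exists>\<mu>. \<forall>x\<in>V. \<forall>y\<in>V. adj_poly V E p (indicator {y}) x = \<mu> (d x y)"
proof -
  obtain W where "\<forall>n. \<forall>x\<in>V. \<forall>y\<in>V. (adj_op V E ^^ n) (indicator {y} :: 'a \<Rightarrow> real) x = W n (d x y)"
    using adj_pow_indicator_dist by metis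
  then show ?thesis
    by (intro exI[of _ "\<lambda>i. \<Sum>k\<le>degree p. coeff p k * W k i"]) (simp add: adj_poly_def)
qed

lemma sum_indicator_mult: "y \<in> V \<Longrightarrow> (\<Sum>x\<in>V. indicator {y} x * h x) = (h y :: real)"
proof -
  assume "y \<in> V"
  have "(\<Sum>x\<in>V. indicator {y} x * h x) = (\<Sum>x\<in>V. if x = y then h x else 0)"
    by (intro sum.cong) (auto simp: indicator_def)
  with \<open>y \<in> V\<close> show ?thesis using finite_vertices by simp
qed

lemma sum_indicator_expansion:
  assumes "vanishes_outside V g"
  shows "(\<lambda>z. \<Sum>y\<in>V. g y * (indicator {y} z :: real)) = g"
proof
  fix z
  have "(\<Sum>y\<in>V. g y * (indicator {y} z :: real)) = (\<Sum>y\<in>V. if y = z then g y else 0)"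
    by (intro sum.cong) (auto simp: indicator_def)
  then show "(\<Sum>y\<in>V. g y * (indicator {y} z :: real)) = g z"
    using assms finite_vertices by (simp add: vanishes_outside_def)
qed

lemma vanishes_outside_indicator: "y \<in> V \<Longrightarrow> vanishes_outside V (indicator {y})"
  by (auto simp: vanishes_outside_def indicator_def)

lemma quadratic_form_adj_poly_square:
  fixes r :: "real poly"
  assumes \<mu>: "\<forall>x\<in>V. \<forall>y\<in>V. adj_poly V E (r * r) (indicator {y}) x = \<mu> (d x y)"
    and g: "vanishes_outside V g"
  shows "(\<Sum>x\<in>V. \<Sum>y\<in>V. g x * g y * \<mu> (d x y)) = (\<Sum>x\<in>V. (adj_poly V E r g x)\<^sup>2)"
proof -
  have "(\<Sum>y\<in>V. g y * \<mu> (d x y)) = adj_poly V E (r * r) g x" if "x \<in> V" for x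
  proof -
    have "(\<Sum>y\<in>V. g y * \<mu> (d x y)) = adj_poly V E (r * r) (\<lambda>z. \<Sum>y\<in>V. g y * indicator {y} z) x"
      using \<mu> that by (simp add: adj_poly_sum)
    then show ?thesis using sum_indicator_expansion[OF g] by simp
  qed
  then have "(\<Sum>x\<in>V. \<Sum>y\<in>V. g x * g y * \<mu> (d x y)) = (\<Sum>x\<in>V. g x * adj_poly V E r (adj_poly V E r g) x)"
    by (intro sum.cong refl) (simp add: mult.assoc adj_poly_mult flip: sum_distrib_left)
  also have "\<dots> = (\<Sum>x\<in>V. (adj_poly V E r g x)\<^sup>2)"
    by (simp add: adj_poly_symmetric[OF simple] power2_eq_square)
  finally show ?thesis .
qed

lemma eigen_kernel_pos:
  fixes r :: "real poly"
  assumes \<mu>: "\<forall>x\<in>V. \<forall>y\<in>V. adj_poly V E (r * r) (indicator {y}) x = \<mu> (d x y)"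
    and f: "vanishes_outside V f" "f x0 \<noteq> 0" "adj_op V E f = (\<lambda>x. \<theta> * f x)"
    and r: "poly r \<theta> \<noteq> 0"
  shows "\<mu> 0 > 0"
proof (rule ccontr)
  assume "\<not> \<mu> 0 > 0"
  have x0: "x0 \<in> V" using f(1,2) by (auto simp: vanishes_outside_def)
  have "adj_poly V E r (indicator {y}) x0 = 0" if y: "y \<in> V" for y
  proof -
    have "(\<Sum>x\<in>V. \<Sum>z\<in>V. indicator {y} x * indicator {y} z * \<mu> (d x z))
        = (\<Sum>x\<in>V. indicator {y} x * \<mu> (d x y))"
      by (intro sum.cong refl) (simp add: mult.assoc sum_indicator_mult[OF y] flip: sum_distrib_left)
    also have "\<dots> = \<mu> 0"
      using sum_indicator_mult[OF y] gdist_eq_0_iff[OF y y] by simp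
    finally have "\<mu> 0 = (\<Sum>z\<in>V. (adj_poly V E r (indicator {y}) z)\<^sup>2)"
      using quadratic_form_adj_poly_square[OF \<mu> vanishes_outside_indicator[OF y]] by simp
    then have "(\<Sum>z\<in>V. (adj_poly V E r (indicator {y}) z)\<^sup>2) = 0"
      using \<open>\<not> \<mu> 0 > 0\<close> sum_nonneg[of V "\<lambda>z. (adj_poly V E r (indicator {y}) z)\<^sup>2"] by auto
    then show ?thesis using finite_vertices x0 by (simp add: sum_nonneg_eq_0_iff)
  qed
  then have "adj_poly V E r (\<lambda>z. \<Sum>y\<in>V. f y * indicator {y} z) x0 = 0"
    by (simp add: adj_poly_sum)
  then have "poly r \<theta> * f x0 = 0"
    unfolding sum_indicator_expansion[OF f(1)] adj_poly_eigenvector[OF f(3)] .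
  with r f(2) show False by simp
qed

lemma eigen_kernel_recurrence:
  fixes r :: "real poly"
  assumes \<mu>: "\<forall>x\<in>V. \<forall>y\<in>V. adj_poly V E (r * r) (indicator {y}) x = \<mu> (d x y)"
    and ann: "\<And>w. vanishes_outside V w \<Longrightarrow> adj_poly V E ([:-\<theta>, 1:] * r) w = (\<lambda>x. 0)"
    and x: "x \<in> V" and y: "y \<in> V"
  shows "\<theta> * \<mu> (d x y) = dist_adj \<mu> (d x y)"
proof -
  let ?u = "adj_poly V E (r * r) (indicator {y})"
  have "vanishes_outside V (adj_poly V E r (indicator {y}))"
    using vanishes_outside_adj_poly[OF vanishes_outside_indicator[OF y]] .
  then have "adj_poly V E [:-\<theta>, 1:] ?u = (\<lambda>x. 0)"
    using ann by (simp only: adj_poly_mult)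
  then have "adj_op V E ?u x = \<theta> * ?u x"
    using adj_poly_linear_factor[of V E \<theta> ?u x] by simp
  moreover have "adj_op V E ?u x = adj_op V E (\<lambda>z. \<mu> (d z y)) x"
    using \<mu> y by (auto intro: adj_op_cong)
  ultimately show ?thesis using adj_op_dist[OF x y] \<mu> x y by simp
qed

definition dist_kernel_psd :: "(nat \<Rightarrow> real) \<Rightarrow> bool" where
  "dist_kernel_psd \<mu> \<longleftrightarrow>
     (\<forall>g. vanishes_outside V g \<longrightarrow> 0 \<le> (\<Sum>x\<in>V. \<Sum>y\<in>V. g x * g y * \<mu> (d x y)))"

text \<open>The kernel is \<open>r(A)\<^sup>2\<close> with \<open>r = \<Prod>\<^bsub>\<theta>' \<noteq> \<theta>\<^esub> (x - \<theta>')\<close>, a multiple of the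
  orthogonal projection onto the \<open>\<theta>\<close>-eigenspace; \<open>\<mu>\<close> is a multiple of the standard sequence of \<open>\<theta>\<close>.\<close>

theorem eigen_kernel:
  assumes \<theta>: "adj_eigenvalue V E \<theta>"
    and \<Theta>: "finite \<Theta>" "{t. adj_eigenvalue V E t} \<subseteq> \<Theta>"
  shows "\<exists>\<mu>. \<mu> 0 > 0 \<and> (\<forall>x\<in>V. \<forall>y\<in>V. \<theta> * \<mu> (d x y) = dist_adj \<mu> (d x y)) \<and> dist_kernel_psd \<mu>"
proof -
  define r where "r = (\<Prod>t\<in>\<Theta> - {\<theta>}. [:-t, 1:])"
  obtain \<mu> where \<mu>: "\<forall>x\<in>V. \<forall>y\<in>V. adj_poly V E (r * r) (indicator {y}) x = \<mu> (d x y)"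
    using adj_poly_indicator_dist by blast
  obtain f where f: "\<exists>x\<in>V. f x \<noteq> 0" "\<forall>x\<in>V. (\<Sum>y\<in>V. (if E x y then 1 else 0) * f y) = \<theta> * f x"
    using \<theta> unfolding adj_eigenvalue_def by blast
  define f' where "f' x = (if x \<in> V then f x else 0)" for x
  have "vanishes_outside V f'" by (simp add: vanishes_outside_def f'_def)
  moreover obtain x0 where "x0 \<in> V" "f x0 \<noteq> 0" using f(1) by blast
  then have "f' x0 \<noteq> 0" by (simp add: f'_def)
  moreover have "adj_op V E f' = (\<lambda>x. \<theta> * f' x)"
  proof
    fix x
    show "adj_op V E f' x = \<theta> * f' x"
    proof (cases "x \<in> V")
      case True
      have "adj_op V E f' x = (\<Sum>y\<in>V. (if E x y then 1 else 0) * f y)"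
        using True finite_vertices by (auto simp: adj_op_eq_sum_if f'_def intro!: sum.cong)
      then show ?thesis using f(2) True by (simp add: f'_def)
    qed (simp add: adj_op_def f'_def)
  qed
  moreover have "poly r \<theta> \<noteq> 0"
    using \<Theta>(1) by (simp add: r_def poly_prod)
  ultimately have "\<mu> 0 > 0" by (rule eigen_kernel_pos[OF \<mu>])
  moreover have "\<theta> * \<mu> (d x y) = dist_adj \<mu> (d x y)" if "x \<in> V" "y \<in> V" for x y
  proof (rule eigen_kernel_recurrence[OF \<mu> _ that])
    have "\<theta> \<in> \<Theta>" using \<theta> \<Theta>(2) by blast
    then have "[:-\<theta>, 1:] * r = (\<Prod>t\<in>\<Theta>. [:-t, 1:])"
      unfolding r_def by (rule prod.remove[OF \<Theta>(1), symmetric])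
    then show "adj_poly V E ([:-\<theta>, 1:] * r) w = (\<lambda>x. 0)" if "vanishes_outside V w" for w
      using annihilated_by_eigenvalues[OF simple \<Theta> that] by simp
  qed
  moreover have "dist_kernel_psd \<mu>"
    unfolding dist_kernel_psd_def by (simp add: quadratic_form_adj_poly_square[OF \<mu>] sum_nonneg)
  ultimately show ?thesis by blast
qed

end

section \<open>Generalized quadrangles in a distance-regular graph\<close>

lemma (in distance_regular_graph) quadratic_form_induced_eigenvector:
  fixes v :: "'a \<Rightarrow> real" and \<mu> :: "nat \<Rightarrow> real"
  assumes S: "S \<subseteq> V"
    and dist2: "\<And>x y. x \<in> S \<Longrightarrow> y \<in> S \<Longrightarrow> x \<noteq> y \<Longrightarrow> \<not> E x y \<Longrightarrow> d x y = 2"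
    and v: "vanishes_outside S v" "adj_op S (induced E S) v = (\<lambda>x. \<rho> * v x)" "(\<Sum>x\<in>S. v x) = 0"
  shows "(\<Sum>x\<in>V. \<Sum>y\<in>V. v x * v y * \<mu> (d x y)) = (\<mu> 0 - \<mu> 2 + \<rho> * (\<mu> 1 - \<mu> 2)) * (\<Sum>x\<in>S. (v x)\<^sup>2)"
proof -
  have fin: "finite S" using S finite_vertices by (rule finite_subset)
  have row: "(\<Sum>y\<in>S. v y * \<mu> (d x y)) = (\<mu> 0 - \<mu> 2 + \<rho> * (\<mu> 1 - \<mu> 2)) * v x" if x: "x \<in> S" for x
  proof -
    have "v y * \<mu> (d x y) = \<mu> 2 * v y + (if y = x then (\<mu> 0 - \<mu> 2) * v y else 0)
        + (\<mu> 1 - \<mu> 2) * (if induced E S x y then v y else 0)" if y: "y \<in> S" for y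
    proof -
      have xy: "x \<in> V" "y \<in> V" using x y S by auto
      consider "y = x" | "y \<noteq> x" "E x y" | "y \<noteq> x" "\<not> E x y" by blast
      then show ?thesis
      proof cases
        case 1
        then show ?thesis using gdist_eq_0_iff[OF xy] adj_irrefl by (simp add: induced_def algebra_simps)
      next
        case 2
        then show ?thesis using gdist_eq_1_iff[OF xy] x y by (simp add: induced_def algebra_simps)
      next
        case 3
        then show ?thesis using dist2[OF x y] by (simp add: induced_def)
      qed
    qed
    then have "(\<Sum>y\<in>S. v y * \<mu> (d x y)) = \<mu> 2 * (\<Sum>y\<in>S. v y) + (\<mu> 0 - \<mu> 2) * v x
        + (\<mu> 1 - \<mu> 2) * adj_op S (induced E S) v x"
      using fin x by (simp add: sum.distrib sum_distrib_left adj_op_eq_sum_if)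
    then show ?thesis using v(2,3) by (simp add: algebra_simps)
  qed
  have "(\<Sum>x\<in>V. \<Sum>y\<in>V. v x * v y * \<mu> (d x y)) = (\<Sum>x\<in>S. \<Sum>y\<in>V. v x * v y * \<mu> (d x y))"
    using v(1) S by (intro sum.mono_neutral_right finite_vertices) (auto simp: vanishes_outside_def)
  also have "\<dots> = (\<Sum>x\<in>S. \<Sum>y\<in>S. v x * v y * \<mu> (d x y))"
    using v(1) S
    by (intro sum.cong refl sum.mono_neutral_right finite_vertices) (auto simp: vanishes_outside_def)
  also have "\<dots> = (\<Sum>x\<in>S. v x * ((\<mu> 0 - \<mu> 2 + \<rho> * (\<mu> 1 - \<mu> 2)) * v x))"
    by (intro sum.cong refl) (simp add: mult.assoc row flip: sum_distrib_left)
  finally show ?thesis by (simp add: sum_distrib_right power2_eq_square mult_ac)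
qed

lemma (in distance_regular_graph) induced_eigenvector_coefficient_nonneg:
  fixes v :: "'a \<Rightarrow> real" and \<mu> :: "nat \<Rightarrow> real"
  assumes psd: "dist_kernel_psd \<mu>" and S: "S \<subseteq> V"
    and dist2: "\<And>x y. x \<in> S \<Longrightarrow> y \<in> S \<Longrightarrow> x \<noteq> y \<Longrightarrow> \<not> E x y \<Longrightarrow> d x y = 2"
    and v: "vanishes_outside S v" "x0 \<in> S" "v x0 \<noteq> 0"
      "adj_op S (induced E S) v = (\<lambda>x. \<rho> * v x)" "(\<Sum>x\<in>S. v x) = 0"
  shows "0 \<le> \<mu> 0 - \<mu> 2 + \<rho> * (\<mu> 1 - \<mu> 2)"
proof -
  have "vanishes_outside V v" using v(1) S by (auto simp: vanishes_outside_def)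
  then have "0 \<le> (\<Sum>x\<in>V. \<Sum>y\<in>V. v x * v y * \<mu> (d x y))"
    using psd unfolding dist_kernel_psd_def by blast
  also have "\<dots> = (\<mu> 0 - \<mu> 2 + \<rho> * (\<mu> 1 - \<mu> 2)) * (\<Sum>x\<in>S. (v x)\<^sup>2)"
    by (rule quadratic_form_induced_eigenvector[OF S dist2 v(1,4,5)])
  finally have "0 \<le> (\<mu> 0 - \<mu> 2 + \<rho> * (\<mu> 1 - \<mu> 2)) * (\<Sum>x\<in>S. (v x)\<^sup>2)" .
  moreover have "0 < (\<Sum>x\<in>S. (v x)\<^sup>2)"
    using v(2,3) finite_subset[OF S finite_vertices] by (intro sum_pos2[of S x0]) auto
  ultimately show ?thesis by (simp add: zero_le_mult_iff)
qed

lemma (in distance_regular_graph) eigen_kernel_initial_terms: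
  assumes rec: "\<forall>x\<in>V. \<forall>y\<in>V. \<theta> * \<mu> (d x y) = dist_adj \<mu> (d x y)" and pq: "E p q"
  shows "\<theta> * \<mu> 0 = real (b 0) * \<mu> 1"
    and "\<theta> * \<mu> 1 = \<mu> 0 + real (b 1) * \<mu> 2 + (real (b 0) - 1 - real (b 1)) * \<mu> 1"
proof -
  have V: "p \<in> V" "q \<in> V" using adj_vertices pq by auto
  have "d p p = 0" "d p q = 1" using gdist_eq_0_iff[OF V(1) V(1)] gdist_eq_1_iff[OF V] pq by auto
  then have e0: "\<theta> * \<mu> 0 = dist_adj \<mu> 0" and e1: "\<theta> * \<mu> 1 = dist_adj \<mu> 1"
    using rec[rule_format, OF V(1) V(1)] rec[rule_format, OF V] by simp_all
  show "\<theta> * \<mu> 0 = real (b 0) * \<mu> 1"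
    using e0 by (simp add: dist_adj_def)
  show "\<theta> * \<mu> 1 = \<mu> 0 + real (b 1) * \<mu> 2 + (real (b 0) - 1 - real (b 1)) * \<mu> 1"
    using e1 c_1_eq_1[OF pq] by (simp add: dist_adj_def numeral_2_eq_2)
qed

text \<open>In a \<open>GQ(s,t)\<close>, \<open>w\<close> is \<open>-s\<^sup>2\<close> times the standard sequence \<open>(1, -1/s, 1/s\<^sup>2)\<close> of the
  eigenvalue \<open>-(t+1)\<close>.\<close>

lemma (in distance_regular_graph) gq_eigenvector:
  assumes D: "D = 2" and b: "b 0 = (t+1)*s" "b 1 = t*s" and c: "c 1 = 1" "c 2 = t+1"
    and s: "s > 0" and p: "p \<in> V"
  shows "\<exists>v. vanishes_outside V v \<and> v p \<noteq> 0 \<and> adj_op V E v = (\<lambda>x. -(real t + 1) * v x)"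
proof -
  define w :: "nat \<Rightarrow> real" where "w i = (if i = 0 then - (real s)\<^sup>2 else if i = 1 then real s else -1)" for i
  define v where "v x = (if x \<in> V then w (d x p) else 0)" for x
  have "adj_op V E v x = -(real t + 1) * v x" for x
  proof (cases "x \<in> V")
    case x: True
    have "adj_op V E v x = adj_op V E (\<lambda>z. w (d z p)) x"
      by (rule adj_op_cong) (simp add: v_def)
    also have "\<dots> = dist_adj w (d x p)" by (rule adj_op_dist[OF x p])
    finally have Av: "adj_op V E v x = dist_adj w (d x p)" .
    have "d x p \<le> 2" using gdist_le_diameter[OF x p] D by simp
    then consider "d x p = 0" | "d x p = 1" | "d x p = 2" by linarith
    then show ?thesis
    proof cases
      case 1
      then show ?thesis using b x by (simp add: Av v_def w_def dist_adj_def power2_eq_square algebra_simps)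
    next
      case 2
      then show ?thesis using b c x by (simp add: Av v_def w_def dist_adj_def power2_eq_square algebra_simps)
    next
      case 3
      then show ?thesis using b c x b_diameter_eq_0 D by (simp add: Av v_def w_def dist_adj_def algebra_simps)
    qed
  qed (simp add: adj_op_def v_def)
  moreover have "v p \<noteq> 0" using p s by (simp add: v_def w_def gdist_eq_0_iff)
  moreover have "vanishes_outside V v" by (simp add: vanishes_outside_def v_def)
  ultimately show ?thesis by blast
qed

lemma is_GQ_distance_regular:
  assumes "is_GQ S E s t"
  obtains b c where "distance_regular_graph S E b c 2" "b 0 = (t+1)*s" "b 1 = t*s" "c 1 = 1" "c 2 = t+1"
  using assms unfolding is_GQ_def distance_regular_graph_def by blast

lemma is_GQ_eigenvector:
  assumes gq: "is_GQ S E s t"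
  shows "\<exists>v. vanishes_outside S v \<and> (\<exists>x\<in>S. v x \<noteq> 0) \<and>
    adj_op S E v = (\<lambda>x. -(real t + 1) * v x) \<and> (\<Sum>x\<in>S. v x) = 0"
proof -
  obtain b c where Q: "distance_regular_graph S E b c 2"
    and bc: "b 0 = (t+1)*s" "b 1 = t*s" "c 1 = 1" "c 2 = t+1"
    using is_GQ_distance_regular[OF gq] .
  have s: "s > 0" using gq by (simp add: is_GQ_def)
  obtain p where "p \<in> S"
    using Q unfolding distance_regular_graph_def distance_regular_def by blast
  then obtain v where v: "vanishes_outside S v" "v p \<noteq> 0" "adj_op S E v = (\<lambda>x. -(real t + 1) * v x)"
    using distance_regular_graph.gq_eigenvector[OF Q refl bc s] by blast
  moreover have "(\<Sum>x\<in>S. v x) = 0"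
    using distance_regular_graph.eigenvector_sum_eq_0[OF Q v(3)] by simp
  ultimately show ?thesis using \<open>p \<in> S\<close> by blast
qed

lemma is_GQ_common_neighbour:
  assumes gq: "is_GQ S E s t" and xy: "x \<in> S" "y \<in> S" "x \<noteq> y" "\<not> E x y"
  shows "\<exists>z. E x z \<and> E z y"
proof -
  obtain b c where Q: "distance_regular_graph S E b c 2"
    using is_GQ_distance_regular[OF gq] .
  have "gdist E x y = 2"
    using distance_regular_graph.gdist_le_diameter[OF Q xy(1,2)] xy
      distance_regular_graph.gdist_eq_0_iff[OF Q xy(1,2)] distance_regular_graph.gdist_eq_1_iff[OF Q xy(1,2)]
    by linarith
  then show ?thesis
    using distance_regular_graph.walk_gdist[OF Q xy(1,2)] by (auto simp: numeral_2_eq_2)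
qed

lemma is_GQ_edge:
  assumes gq: "is_GQ S E s t"
  obtains x y where "E x y"
proof -
  obtain b c where Q: "distance_regular_graph S E b c 2" and b: "b 0 = (t+1)*s"
    using is_GQ_distance_regular[OF gq] .
  obtain p where p: "p \<in> S"
    using Q unfolding distance_regular_graph_def distance_regular_def by blast
  have "card {z\<in>S. E p z} \<noteq> 0"
    using distance_regular_graph.card_neighbours[OF Q p] b gq by (simp add: is_GQ_def)
  then have "{z\<in>S. E p z} \<noteq> {}" by (metis card.empty)
  then show ?thesis using that by blast
qed

lemma (in distance_regular_graph) induced_GQ_gdist_eq_2:
  assumes S: "S \<subseteq> V" and gq: "is_GQ S (induced E S) s t"
    and xy: "x \<in> S" "y \<in> S" "x \<noteq> y" "\<not> E x y"
  shows "d x y = 2"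
proof -
  obtain z where "E x z" "E z y"
    using is_GQ_common_neighbour[OF gq xy(1-3)] xy(4) by (auto simp: induced_def)
  then show ?thesis using gdist_eq_2I xy S by blast
qed

lemma (in distance_regular_graph) induced_GQ_coefficient_nonneg:
  assumes psd: "dist_kernel_psd \<mu>" and S: "S \<subseteq> V" and gq: "is_GQ S (induced E S) s t"
  shows "0 \<le> \<mu> 0 - \<mu> 2 - (real t + 1) * (\<mu> 1 - \<mu> 2)"
proof -
  obtain v x0 where v: "vanishes_outside S v" "x0 \<in> S" "v x0 \<noteq> 0"
    "adj_op S (induced E S) v = (\<lambda>x. -(real t + 1) * v x)" "(\<Sum>x\<in>S. v x) = 0"
    using is_GQ_eigenvector[OF gq] by blast
  show ?thesis
    using induced_eigenvector_coefficient_nonneg[OF psd S induced_GQ_gdist_eq_2[OF S gq] v]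
    by (simp add: algebra_simps)
qed

lemma (in distance_regular_graph) eigenvalue_enumeration:
  assumes eigs: "{t. adj_eigenvalue V E t} = \<theta> ` {0..D}"
    and decr: "\<And>i. i < D \<Longrightarrow> \<theta> (Suc i) < \<theta> i" and D: "1 \<le> D"
  shows "finite {t. adj_eigenvalue V E t}" "adj_eigenvalue V E (\<theta> 1)" "\<theta> 1 < real (b 0)"
proof -
  have ev: "adj_eigenvalue V E (\<theta> j)" if "j \<le> D" for j
  proof -
    have "\<theta> j \<in> \<theta> ` {0..D}" using that by simp
    then show ?thesis unfolding eigs[symmetric] by simp
  qed
  show "finite {t. adj_eigenvalue V E t}" unfolding eigs by simp
  show "adj_eigenvalue V E (\<theta> 1)" using ev D by simp
  show "\<theta> 1 < real (b 0)"
    using D decr[of 0] adj_eigenvalue_le_valency[OF ev[of 0]] by simp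
qed

lemma (in distance_regular_graph) real_drg_a_1:
  assumes "E p q"
  shows "real (drg_a b c 1) = real (b 0) - real (b 1) - 1"
proof -
  have "p \<in> V" "q \<in> V" "d p q = 1" using gdist_eq_1_iff adj_vertices assms by auto
  then show ?thesis
    using c_plus_b_le_valency[of p q] c_1_eq_1[OF assms] by (simp add: drg_a_def of_nat_diff)
qed

lemma eigen_sequence_bound:
  fixes \<theta> k b1 t m0 m1 m2 :: real
  assumes rec: "\<theta> * m0 = k * m1" "\<theta> * m1 = m0 + b1 * m2 + (k - 1 - b1) * m1"
    and K: "0 \<le> m0 - m2 - (t + 1) * (m1 - m2)"
    and pos: "m0 > 0" "\<theta> < k" "k > 0" "b1 \<ge> 0"
  shows "t * \<theta> \<le> b1 - t"
proof -
  have "(\<theta> - k) * (t * \<theta> - b1 + t) * m0 = k * b1 * (m0 - m2 - (t + 1) * (m1 - m2))"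
    using rec by algebra
  also have "\<dots> \<ge> 0" using K pos by simp
  finally have "0 \<le> (\<theta> - k) * (t * \<theta> - b1 + t)" using pos(1) by (simp add: zero_le_mult_iff)
  then show ?thesis using pos(2) by (simp add: zero_le_mult_iff)
qed

theorem lemma3p2:
  fixes V :: "'a set" and E :: "'a \<Rightarrow> 'a \<Rightarrow> bool"
    and b c :: "nat \<Rightarrow> nat" and D s :: nat and \<theta> :: "nat \<Rightarrow> real"
  assumes drg: "distance_regular V E b c D"
    and k3: "b 0 \<ge> 3" and D2: "D \<ge> 2"
    and decr: "\<And>i. i < D \<Longrightarrow> \<theta> (Suc i) < \<theta> i"
    and eigs: "{t. adj_eigenvalue V E t} = \<theta> ` {0..D}"
    and c2: "c 2 \<noteq> 1"
    and s: "s > 0"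
    and gq: "\<exists>S\<subseteq>V. is_GQ S (induced E S) s (c 2 - 1)"
  shows "\<theta> 1 \<le> (real (b 0) - (real (drg_a b c 1) + 1)) / (real (c 2) - 1) - 1"
proof -
  interpret G: distance_regular_graph V E b c D by unfold_locales (fact drg)
  obtain S where S: "S \<subseteq> V" and gqS: "is_GQ S (induced E S) s (c 2 - 1)" using gq by blast
  define t where "t = c 2 - 1"
  have t: "t > 0" "real (c 2) - 1 = real t" using gqS by (auto simp: is_GQ_def t_def)
  obtain p q where "induced E S p q" by (rule is_GQ_edge[OF gqS])
  then have pq: "E p q" by (simp add: induced_def)
  have "1 \<le> D" using D2 by simp
  note eigenvalues = G.eigenvalue_enumeration[OF eigs decr this]
  obtain \<mu> where \<mu>: "\<mu> 0 > 0" "\<forall>x\<in>V. \<forall>y\<in>V. \<theta> 1 * \<mu> (G.d x y) = G.dist_adj \<mu> (G.d x y)"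
    "G.dist_kernel_psd \<mu>"
    using G.eigen_kernel[OF eigenvalues(2,1) order_refl] by blast
  have "0 \<le> \<mu> 0 - \<mu> 2 - (real t + 1) * (\<mu> 1 - \<mu> 2)"
    using G.induced_GQ_coefficient_nonneg[OF \<mu>(3) S gqS] unfolding t_def .
  then have "real t * \<theta> 1 \<le> real (b 1) - real t"
    using eigen_sequence_bound[OF G.eigen_kernel_initial_terms[OF \<mu>(2) pq]] \<mu>(1) eigenvalues(3) k3 by simp
  then have "\<theta> 1 \<le> real (b 1) / real t - 1" using t(1) by (simp add: field_simps)
  then show ?thesis using G.real_drg_a_1[OF pq] t(2) by simp
qed

end
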